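(* Consider the pay-to-bid game with re-entry and its unique symmetric subgame perfect equilibrium, and let the seller's expected revenue be the sale price $s$ plus the expected total bid fees collected. Then: (I) If players are risk neutral ($u(x)=x$), the seller's expected revenue equals $v$. If players are risk-loving ($\rho<0$): (II) the seller's expected revenue equals $\frac{c\,u(v-s)}{u(c)}+s$; (III) it is independent of the number of players $n$; (IV) it is strictly greater than $v$; (V) it is strictly increasing in $v$, decreasing in $s$, decreasing in $c$, and decreasing in $\rho$ (i.e. larger when players are more risk-loving); (VI) its supremum over sale prices $s\ge 0$ and bid fees $0<c<v-s$ (for fixed $v$ and $\rho$) equals $u(v)=\frac{1-e^{-\rho v}}{\rho}$.
   Context: Pay-to-bid game: an object has monetary value $v>0$ that is common knowledge; there are $n\ge 2$ players; the bid fee is $c>0$ and the fixed sale price is $s\ge 0$, with $c<v-s$. Play proceeds in rounds $t=1,2,3,\dots$ with complete information. In each round every player simultaneously chooses an action in $\{\text{Bid},\text{No Bid}\}$. Each Bid costs $c$, paid immediately to the seller. If exactly one player bids in a round, she wins the object (value $v$), pays $s$ to the seller, and the game ends; if two or more bid, play continues; if none bids, the round is replayed. With re-entry, all $n$ players are active in every round regardless of history. Players do not discount; payoff is $u$(final wealth) with $u(x)=\frac{1-e^{-\rho x}}{\rho}$ for a constant $\rho<0$ (constant absolute risk-loving utility), or $u(x)=x$ in the risk-neutral case. In the unique symmetric subgame perfect equilibrium each player plays Bid in every round with probability $1-\left(u(c)/u(v-s)\right)^{1/(n-1)}$. *)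

theory Defs
  imports Complex_Main
begin

text \<open>Constant absolute risk-loving (CARA) utility with coefficient rho (rho < 0 in the paper).\<close>
definition cara :: "real \<Rightarrow> real \<Rightarrow> real" where
  "cara \<rho> x = (1 - exp (- \<rho> * x)) / \<rho>"

text \<open>Per-round bid probability of each player in the unique symmetric SPE
  of the pay-to-bid game with re-entry, for utility u, n players, bid fee c,
  object value v and sale price s.\<close>
definition bid_prob :: "(real \<Rightarrow> real) \<Rightarrow> nat \<Rightarrow> real \<Rightarrow> real \<Rightarrow> real \<Rightarrow> real" where
  "bid_prob u n c v s = 1 - (u c / u (v - s)) powr (1 / (real n - 1))"

text \<open>Probability that a round ends the game (exactly one of n players bids),
  when each bids independently with probability p.\<close>
definition end_prob :: "nat \<Rightarrow> real \<Rightarrow> real" where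
  "end_prob n p = real n * p * (1 - p) ^ (n - 1)"

text \<open>Round t (t = 0,1,2,...) is reached with probability (1-q)^t, where q is the
  probability that a round ends the game; in a reached round the expected
  fees collected are n*p*c.\<close>
definition seller_revenue :: "(real \<Rightarrow> real) \<Rightarrow> nat \<Rightarrow> real \<Rightarrow> real \<Rightarrow> real \<Rightarrow> real" where
  "seller_revenue u n c v s =
     (let p = bid_prob u n c v s; q = end_prob n p
      in s + (\<Sum>t. (1 - q) ^ t * (real n * p * c)))"

end

theory Submission
  imports Defs
begin

(* Let r = u c / u (v - s).  In the symmetric equilibrium each player abstains with
   probability 1 - p = r powr (1/(n-1)), so a round ends the game with probability
   q = n p r, and the expected fees form a geometric series summing to n p c / q = c / r.
   Hence the revenue is  c u(v-s)/u(c) + s  for every utility with 0 < u c < u (v-s)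
   (revenue_formula); for u = id this is v, and the formula does not involve n.

   For rho < 0 we write cara rho = rl_util a with a = -rho > 0, where
   rl_util a x = (exp (a x) - 1)/a is strictly increasing and strictly convex with
   rl_util a 0 = 0.  Convexity gives: the chord slope rl_util a x / x increases in x
   (revenue exceeds v, decreases in c); the increment of rl_util a on [x, y] exceeds
   y - x times the slope at x (revenue decreases in s, and never exceeds rl_util a v);
   and c / rl_util a c > exp (- a c) (with s = 0 and c -> 0 the revenue approaches
   rl_util a v, which is therefore the supremum).  Monotonicity in rho follows by
   differentiating the ratio (exp (t x) - 1)/(exp (t c) - 1) in t. *)

lemma one_plus_less_exp: "x \<noteq> 0 \<Longrightarrow> 1 + x < exp (x::real)"
  using exp_minus_greater[of "-x"] by simp

text \<open>Exactly one success among n Bernoulli trials is at most certain; this keeps the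
  ratio of the geometric series of reached rounds in [0, 1).\<close>
lemma end_prob_le_one:
  fixes p :: real
  assumes "0 \<le> p" "p \<le> 1" "n \<ge> 1"
  shows "end_prob n p \<le> 1"
proof -
  have "real (n choose 1) * p ^ 1 * (1 - p) ^ (n - 1)
      \<le> (\<Sum>k\<le>n. real (n choose k) * p ^ k * (1 - p) ^ (n - k))"
    by (rule member_le_sum) (use assms in auto)
  also have "\<dots> = (p + (1 - p)) ^ n"
    by (rule binomial_ring [symmetric])
  finally show ?thesis by (simp add: end_prob_def)
qed

text \<open>In equilibrium the probability that all n - 1 opponents abstain is u c / u (v - s),
  the ratio that makes a player indifferent between bidding and not bidding.\<close>
lemma bid_prob_indifference:
  fixes u :: "real \<Rightarrow> real"
  assumes "0 < u c" "u c < u (v - s)" "n \<ge> 2"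
  shows "0 < bid_prob u n c v s" "bid_prob u n c v s \<le> 1"
    and "(1 - bid_prob u n c v s) ^ (n - 1) = u c / u (v - s)"
proof -
  define r where "r = u c / u (v - s)"
  define e where "e = 1 / (real n - 1)"
  have r: "0 < r" "r < 1" and e: "0 < e"
    using assms by (auto simp: r_def e_def)
  have abstain: "1 - bid_prob u n c v s = r powr e"
    by (simp add: bid_prob_def r_def e_def)
  show "0 < bid_prob u n c v s"
    using abstain powr_less_mono2[of e r 1] r e by simp
  show "bid_prob u n c v s \<le> 1"
    using abstain powr_ge_zero[of r e] by linarith
  have "(r powr e) ^ (n - 1) = (r powr e) powr real (n - 1)"
    using r by (simp add: powr_realpow)
  also have "\<dots> = r"
    using assms(3) r by (simp add: powr_powr e_def of_nat_diff)
  finally show "(1 - bid_prob u n c v s) ^ (n - 1) = u c / u (v - s)"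
    by (simp add: abstain r_def)
qed

lemma geometric_total:
  fixes q f :: real
  assumes "0 < q" "q \<le> 1"
  shows "(\<Sum>t. (1 - q) ^ t * f) = f / q"
proof -
  have "(\<lambda>t. (1 - q) ^ t) sums (1 / (1 - (1 - q)))"
    using assms by (intro geometric_sums) auto
  then have "(\<lambda>t. (1 - q) ^ t * f) sums (1 / q * f)"
    by (intro sums_mult2) simp
  then show ?thesis by (simp add: sums_iff)
qed

lemma revenue_formula:
  fixes u :: "real \<Rightarrow> real"
  assumes "0 < u c" "u c < u (v - s)" "n \<ge> 2"
  shows "seller_revenue u n c v s = c * u (v - s) / u c + s"
proof -
  define p where "p = bid_prob u n c v s"
  define r where "r = u c / u (v - s)"
  have p: "0 < p" "p \<le> 1" and abstain: "(1 - p) ^ (n - 1) = r"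
    using bid_prob_indifference[OF assms] by (simp_all add: p_def r_def)
  have r: "0 < r" using assms by (simp add: r_def)
  have q: "end_prob n p = real n * p * r"
    by (simp only: end_prob_def abstain)
  have "0 < end_prob n p" "end_prob n p \<le> 1"
    using q p r assms(3) end_prob_le_one[of p n] by simp_all
  then have "(\<Sum>t. (1 - end_prob n p) ^ t * (real n * p * c)) = real n * p * c / (real n * p * r)"
    by (simp add: geometric_total q)
  also have "\<dots> = c * u (v - s) / u c"
    using p assms by (simp add: r_def)
  finally show ?thesis
    by (simp add: seller_revenue_def p_def)
qed

definition rl_util :: "real \<Rightarrow> real \<Rightarrow> real" where
  "rl_util a x = (exp (a * x) - 1) / a"

lemma cara_rl_util: "cara \<rho> x = rl_util (- \<rho>) x"
  unfolding cara_def rl_util_def by (simp add: diff_divide_distrib)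

lemma rl_util_gt: assumes "a > 0" "x > 0" shows "x < rl_util a x"
  using one_plus_less_exp[of "a * x"] assms by (simp add: rl_util_def field_simps)

lemma rl_util_pos: assumes "a > 0" "x > 0" shows "0 < rl_util a x"
  using rl_util_gt[OF assms] assms by simp

lemma rl_util_strict_mono: assumes "a > 0" "x < y" shows "rl_util a x < rl_util a y"
  using assms by (simp add: rl_util_def divide_strict_right_mono)

lemma rl_util_increment:
  assumes "a > 0" "x < y"
  shows "exp (a * x) * (y - x) \<le> rl_util a y - rl_util a x"
proof -
  have "exp (a * x) * (1 + a * (y - x)) \<le> exp (a * x) * exp (a * (y - x))"
    using exp_ge_add_one_self[of "a * (y - x)"] by simp
  also have "\<dots> = exp (a * y)"
    by (simp flip: exp_add add: algebra_simps)
  finally show ?thesis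
    using assms by (simp add: rl_util_def field_simps)
qed

lemma rl_util_less_slope:
  assumes "a > 0" "x > 0"
  shows "rl_util a x < x * exp (a * x)"
proof -
  have "exp (a * x) * (1 - a * x) < exp (a * x) * exp (- (a * x))"
    using exp_minus_greater[of "a * x"] assms by simp
  then show ?thesis
    using assms by (simp add: rl_util_def field_simps exp_minus)
qed

lemma rl_util_chord_slope_mono:
  assumes "a > 0" "0 < x" "x < y"
  shows "rl_util a x / x < rl_util a y / y"
proof -
  define E where "E = exp (a * x)"
  define F where "F = exp (a * (y - x))"
  have EF: "exp (a * y) = E * F"
    by (simp add: E_def F_def flip: exp_add add: algebra_simps)
  have F: "a * (y - x) < F - 1"
    using one_plus_less_exp[of "a * (y - x)"] assms by (simp add: F_def)
  have E: "E - 1 \<le> a * x * E"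
    using rl_util_less_slope[OF assms(1,2)] assms by (simp add: rl_util_def E_def field_simps)
  have "(y - x) * (E - 1) \<le> x * E * (a * (y - x))"
    using mult_right_mono[OF E, of "y - x"] assms by (simp add: algebra_simps)
  also have "\<dots> < x * E * (F - 1)"
    using F assms by (simp add: E_def)
  finally have "(E - 1) / x < (E * F - 1) / y"
    using assms by (simp add: field_simps)
  moreover have "rl_util a x / x = ((E - 1) / x) / a" "rl_util a y / y = ((E * F - 1) / y) / a"
    by (simp_all add: rl_util_def E_def EF)
  ultimately show ?thesis
    using divide_strict_right_mono[of "(E - 1) / x" "(E * F - 1) / y" a] assms(1) by simp
qed

text \<open>The function z \<mapsto> z exp z / (exp z - 1) is strictly increasing on (0, \<infinity>),
  stated with denominators cleared.\<close>
lemma exp_ratio_weight_mono: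
  fixes z1 z2 :: real
  assumes "0 < z1" "z1 < z2"
  shows "z1 * (exp z2 - 1) * exp z1 < z2 * (exp z1 - 1) * exp z2"
proof -
  define d where "d = z2 - z1"
  have d: "d > 0" using assms by (simp add: d_def)
  have z2: "exp z2 = exp z1 * exp d" by (simp add: d_def flip: exp_add)
  have "exp d * (1 - d) < exp d * exp (- d)"
    using exp_minus_greater[of d] d by simp
  then have ed: "exp d - 1 < d * exp d"
    by (simp flip: exp_add add: algebra_simps)
  have "z1 * (exp d - 1) < z1 * (d * exp d)"
    using ed assms by simp
  also have "\<dots> \<le> (exp z1 - 1) * (d * exp d)"
  proof (rule mult_right_mono)
    show "z1 \<le> exp z1 - 1" using exp_ge_add_one_self[of z1] by linarith
  qed (use d in simp)
  finally have "z1 * (exp z1 * exp d - 1) < (z1 + d) * (exp z1 - 1) * exp d"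
    by (simp add: algebra_simps)
  then have "exp z1 * (z1 * (exp z1 * exp d - 1)) < exp z1 * ((z1 + d) * (exp z1 - 1) * exp d)"
    by simp
  then show ?thesis
    by (simp add: z2 d_def algebra_simps)
qed

text \<open>For 0 < c < x, the utility ratio (exp (t x) - 1)/(exp (t c) - 1) grows with the
  risk-loving coefficient t; its derivative in t is positive by the previous lemma.\<close>
lemma exp_ratio_mono:
  fixes a b c x :: real
  assumes "0 < c" "c < x" "0 < a" "a < b"
  shows "(exp (a*x) - 1) / (exp (a*c) - 1) < (exp (b*x) - 1) / (exp (b*c) - 1)"
proof (rule DERIV_pos_imp_increasing[OF assms(4)])
  fix t assume "a \<le> t" "t \<le> b"
  then have t: "t > 0" using assms by simp
  have den: "exp (t*c) - 1 > 0" using t assms by simp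
  have "t * (c * (exp (t*x) - 1) * exp (t*c)) < t * (x * (exp (t*c) - 1) * exp (t*x))"
    using exp_ratio_weight_mono[of "t*c" "t*x"] t assms by (simp add: algebra_simps)
  then have num: "c * (exp (t*x) - 1) * exp (t*c) < x * (exp (t*c) - 1) * exp (t*x)"
    using t by simp
  define D where "D = (x * exp (t*x) * (exp (t*c) - 1) - (exp (t*x) - 1) * (c * exp (t*c)))
                      / (exp (t*c) - 1)^2"
  have "((\<lambda>t. (exp (t*x) - 1) / (exp (t*c) - 1)) has_real_derivative D) (at t)"
    unfolding D_def using den
    by (auto intro!: derivative_eq_intros simp: power2_eq_square algebra_simps)
  moreover have "D > 0"
    unfolding D_def
  proof (rule divide_pos_pos)
    show "0 < x * exp (t*x) * (exp (t*c) - 1) - (exp (t*x) - 1) * (c * exp (t*c))"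
      using num by (simp add: algebra_simps)
  qed (use den in \<open>simp only: zero_less_power\<close>)
  ultimately show "\<exists>D. ((\<lambda>t. (exp (t*x) - 1) / (exp (t*c) - 1)) has_real_derivative D) (at t) \<and> D > 0"
    by blast
qed

lemma revenue_risk_loving:
  assumes "\<rho> < 0" "0 < c" "c < v - s" "n \<ge> 2"
  shows "seller_revenue (cara \<rho>) n c v s = c * rl_util (- \<rho>) (v - s) / rl_util (- \<rho>) c + s"
  using revenue_formula[of "cara \<rho>" c v s n] assms
    rl_util_pos[of "- \<rho>" c] rl_util_strict_mono[of "- \<rho>" c "v - s"]
  by (simp add: cara_rl_util)

lemma revenue_gt_value:
  assumes "\<rho> < 0" "0 < c" "c < v - s" "n \<ge> 2"
  shows "v < seller_revenue (cara \<rho>) n c v s"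
proof -
  have "rl_util (- \<rho>) c / c < rl_util (- \<rho>) (v - s) / (v - s)"
    using rl_util_chord_slope_mono assms by simp
  then have "v - s < c * rl_util (- \<rho>) (v - s) / rl_util (- \<rho>) c"
    using rl_util_pos[of "- \<rho>" c] assms by (simp add: field_simps)
  then show ?thesis
    using revenue_risk_loving[OF assms] by simp
qed

lemma revenue_mono_value:
  assumes "\<rho> < 0" "0 < c" "c < v - s" "n \<ge> 2" "v < v'"
  shows "seller_revenue (cara \<rho>) n c v s < seller_revenue (cara \<rho>) n c v' s"
proof -
  have "rl_util (- \<rho>) (v - s) < rl_util (- \<rho>) (v' - s)"
    using rl_util_strict_mono assms by simp
  then show ?thesis
    using revenue_risk_loving[OF assms(1-4)] revenue_risk_loving[of \<rho> c v' s n]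
      rl_util_pos[of "- \<rho>" c] assms
    by (simp add: divide_strict_right_mono)
qed

lemma revenue_antimono_price:
  assumes "\<rho> < 0" "0 < c" "c < v - s" "n \<ge> 2" "0 \<le> s'" "s' < s"
  shows "seller_revenue (cara \<rho>) n c v s < seller_revenue (cara \<rho>) n c v s'"
proof -
  define a where "a = - \<rho>"
  have a: "a > 0" using assms by (simp add: a_def)
  have "rl_util a c < c * exp (a * c)"
    using rl_util_less_slope[OF a assms(2)] .
  also have "\<dots> < c * exp (a * (v - s))"
    using a assms by simp
  finally have "(s - s') * rl_util a c < (s - s') * (c * exp (a * (v - s)))"
    using assms by simp
  also have "\<dots> \<le> c * (rl_util a (v - s') - rl_util a (v - s))"
  proof -
    have "exp (a * (v - s)) * (s - s') \<le> rl_util a (v - s') - rl_util a (v - s)"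
      using rl_util_increment[OF a, of "v - s" "v - s'"] assms by simp
    from mult_left_mono[OF this, of c] show ?thesis
      using assms by (simp add: mult_ac)
  qed
  finally have "s - s' < c * (rl_util a (v - s') - rl_util a (v - s)) / rl_util a c"
    using rl_util_pos[OF a assms(2)] by (simp add: pos_less_divide_eq mult.commute)
  then show ?thesis
    using revenue_risk_loving[OF assms(1-4)] revenue_risk_loving[of \<rho> c v s' n] assms
    by (simp add: a_def right_diff_distrib diff_divide_distrib)
qed

lemma revenue_antimono_fee:
  assumes "\<rho> < 0" "0 < c'" "c' < c" "c < v - s" "n \<ge> 2"
  shows "seller_revenue (cara \<rho>) n c v s < seller_revenue (cara \<rho>) n c' v s"
proof -
  define a where "a = - \<rho>"
  have a: "a > 0" using assms by (simp add: a_def)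
  have "rl_util a c' / c' < rl_util a c / c"
    using rl_util_chord_slope_mono[OF a] assms by simp
  then have "c / rl_util a c < c' / rl_util a c'"
    using rl_util_pos[OF a, of c] rl_util_pos[OF a, of c'] assms by (simp add: field_simps)
  then have "c / rl_util a c * rl_util a (v - s) < c' / rl_util a c' * rl_util a (v - s)"
    using rl_util_pos[OF a, of "v - s"] assms by (intro mult_strict_right_mono) simp_all
  then show ?thesis
    using revenue_risk_loving[of \<rho> c v s n] revenue_risk_loving[of \<rho> c' v s n] assms
    by (simp add: a_def)
qed

lemma revenue_mono_risk:
  assumes "\<rho>' < \<rho>" "\<rho> < 0" "0 < c" "c < v - s" "n \<ge> 2"
  shows "seller_revenue (cara \<rho>) n c v s < seller_revenue (cara \<rho>') n c v s"
proof -
  have ratio: "rl_util t (v - s) / rl_util t c = (exp (t * (v - s)) - 1) / (exp (t * c) - 1)"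
    if "t > 0" for t
    using that by (simp add: rl_util_def)
  have "rl_util (- \<rho>) (v - s) / rl_util (- \<rho>) c < rl_util (- \<rho>') (v - s) / rl_util (- \<rho>') c"
    using exp_ratio_mono[of c "v - s" "- \<rho>" "- \<rho>'"] assms by (simp add: ratio)
  from mult_strict_left_mono[OF this \<open>0 < c\<close>] show ?thesis
    using revenue_risk_loving[of \<rho> c v s n] revenue_risk_loving[of \<rho>' c v s n] assms
    by (simp only: times_divide_eq_right add_less_cancel_right)
qed

lemma revenue_le_util_value:
  assumes "\<rho> < 0" "0 \<le> s" "0 < c" "c < v - s" "n \<ge> 2"
  shows "seller_revenue (cara \<rho>) n c v s \<le> cara \<rho> v"
proof -
  define a where "a = - \<rho>"
  have a: "a > 0" using assms by (simp add: a_def)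
  have "c * rl_util a (v - s) \<le> rl_util a c * rl_util a (v - s)"
    using rl_util_gt[OF a assms(3)] rl_util_pos[OF a, of "v - s"] assms by simp
  then have fee_part: "c * rl_util a (v - s) / rl_util a c \<le> rl_util a (v - s)"
    using rl_util_pos[OF a assms(3)] by (simp add: pos_divide_le_eq mult.commute)
  have "rl_util a (v - s) + s \<le> rl_util a v"
  proof (cases "s = 0")
    case False
    then have "exp (a * (v - s)) * s \<le> rl_util a v - rl_util a (v - s)"
      using rl_util_increment[OF a, of "v - s" v] assms by simp
    moreover have "s \<le> exp (a * (v - s)) * s"
      using mult_right_mono[of 1 "exp (a * (v - s))" s] a assms by simp
    ultimately show ?thesis by linarith
  qed simp
  then show ?thesis
    using fee_part revenue_risk_loving[OF assms(1,3,4,5)] by (simp add: cara_rl_util a_def)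
qed

text \<open>... while s = 0 with fee c comes within the factor exp (rho c), which tends to 1 as c -> 0.\<close>
lemma revenue_zero_price_lower:
  assumes "\<rho> < 0" "0 < c" "c < v" "n \<ge> 2"
  shows "cara \<rho> v * exp (\<rho> * c) \<le> seller_revenue (cara \<rho>) n c v 0"
proof -
  define a where "a = - \<rho>"
  have a: "a > 0" using assms by (simp add: a_def)
  have "exp (- (a * c)) < c / rl_util a c"
    using rl_util_less_slope[OF a assms(2)] rl_util_pos[OF a assms(2)]
    by (simp add: pos_less_divide_eq exp_minus field_simps)
  then have "rl_util a v * exp (- (a * c)) \<le> rl_util a v * (c / rl_util a c)"
    using rl_util_pos[OF a, of v] assms by (intro mult_left_mono) simp_all
  then show ?thesis
    using revenue_risk_loving[of \<rho> c v 0 n] assms by (simp add: cara_rl_util a_def mult.commute)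
qed

lemma revenue_sup:
  assumes "\<rho> < 0" "v > 0" "n \<ge> 2"
  shows "(SUP sc\<in>{(s', c'). 0 \<le> s' \<and> 0 < c' \<and> c' < v - s'}.
            seller_revenue (cara \<rho>) n (snd sc) v (fst sc)) = cara \<rho> v"
proof -
  define S where "S = {(s', c'). 0 \<le> s' \<and> 0 < (c'::real) \<and> c' < v - s'}"
  define f where "f = (\<lambda>sc. seller_revenue (cara \<rho>) n (snd sc) v (fst sc))"
  have "Sup (f ` S) = cara \<rho> v"
  proof (rule cSup_eq_non_empty)
    have "(0, v / 2) \<in> S"
      using assms by (simp add: S_def)
    then show "f ` S \<noteq> {}"
      by blast
    show "x \<le> cara \<rho> v" if "x \<in> f ` S" for x
      using that revenue_le_util_value[of \<rho>] assms by (auto simp: S_def f_def)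
    fix y assume y: "\<And>x. x \<in> f ` S \<Longrightarrow> x \<le> y"
    have "eventually (\<lambda>c. cara \<rho> v * exp (\<rho> * c) \<le> y) (at_right 0)"
      using eventually_at_right_real[OF assms(2)]
    proof (rule eventually_mono)
      fix c :: real assume "c \<in> {0<..<v}"
      then have "(0, c) \<in> S" and "cara \<rho> v * exp (\<rho> * c) \<le> f (0, c)"
        using revenue_zero_price_lower[of \<rho> c v n] assms by (simp_all add: S_def f_def)
      moreover from \<open>(0, c) \<in> S\<close> have "f (0, c) \<le> y"
        using y by blast
      ultimately show "cara \<rho> v * exp (\<rho> * c) \<le> y" by linarith
    qed
    moreover have "((\<lambda>c. cara \<rho> v * exp (\<rho> * c)) \<longlongrightarrow> cara \<rho> v * exp (\<rho> * 0)) (at_right 0)"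
      by (intro tendsto_intros)
    ultimately show "cara \<rho> v \<le> y"
      using tendsto_upperbound by fastforce
  qed
  then show ?thesis by (simp add: S_def f_def)
qed

theorem theorem3:
  fixes v c s \<rho> :: real and n :: nat
  assumes "v > 0" and "n \<ge> 2" and "c > 0" and "s \<ge> 0" and "c < v - s"
  shows "seller_revenue (\<lambda>x. x) n c v s = v
    \<and> (\<rho> < 0 \<longrightarrow>
        seller_revenue (cara \<rho>) n c v s = c * cara \<rho> (v - s) / cara \<rho> c + s
      \<and> (\<forall>m::nat. m \<ge> 2 \<longrightarrow> seller_revenue (cara \<rho>) m c v s = seller_revenue (cara \<rho>) n c v s)
      \<and> seller_revenue (cara \<rho>) n c v s > v
      \<and> (\<forall>v'. v < v' \<longrightarrow> seller_revenue (cara \<rho>) n c v s < seller_revenue (cara \<rho>) n c v' s)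
      \<and> (\<forall>s'. 0 \<le> s' \<and> s' < s \<longrightarrow> seller_revenue (cara \<rho>) n c v s < seller_revenue (cara \<rho>) n c v s')
      \<and> (\<forall>c'. 0 < c' \<and> c' < c \<longrightarrow> seller_revenue (cara \<rho>) n c v s < seller_revenue (cara \<rho>) n c' v s)
      \<and> (\<forall>\<rho>'. \<rho>' < \<rho> \<longrightarrow> seller_revenue (cara \<rho>) n c v s < seller_revenue (cara \<rho>') n c v s)
      \<and> (SUP sc\<in>{(s', c'). 0 \<le> s' \<and> 0 < c' \<and> c' < v - s'}.
            seller_revenue (cara \<rho>) n (snd sc) v (fst sc)) = cara \<rho> v)"
proof (intro conjI impI allI)
  show "seller_revenue (\<lambda>x. x) n c v s = v"
    using revenue_formula[of "\<lambda>x. x" c v s n] assms by simp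
  assume \<rho>: "\<rho> < 0"
  have closed_form: "seller_revenue (cara \<rho>) m c v s = c * cara \<rho> (v - s) / cara \<rho> c + s"
    if "m \<ge> 2" for m
    using revenue_risk_loving[OF \<rho> assms(3,5) that] by (simp add: cara_rl_util)
  show "seller_revenue (cara \<rho>) n c v s = c * cara \<rho> (v - s) / cara \<rho> c + s"
    using closed_form[OF assms(2)] .
  show "seller_revenue (cara \<rho>) m c v s = seller_revenue (cara \<rho>) n c v s" if "m \<ge> 2" for m
    using closed_form[OF that] closed_form[OF assms(2)] by simp
  show "seller_revenue (cara \<rho>) n c v s > v"
    using revenue_gt_value[OF \<rho> assms(3,5,2)] .
  show "seller_revenue (cara \<rho>) n c v s < seller_revenue (cara \<rho>) n c v' s" if "v < v'" for v'
    using revenue_mono_value[OF \<rho> assms(3,5,2) that] .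
  show "seller_revenue (cara \<rho>) n c v s < seller_revenue (cara \<rho>) n c v s'"
    if "0 \<le> s' \<and> s' < s" for s'
    using revenue_antimono_price[OF \<rho> assms(3,5,2)] that by simp
  show "seller_revenue (cara \<rho>) n c v s < seller_revenue (cara \<rho>) n c' v s"
    if "0 < c' \<and> c' < c" for c'
    using revenue_antimono_fee[OF \<rho> _ _ assms(5,2)] that by simp
  show "seller_revenue (cara \<rho>) n c v s < seller_revenue (cara \<rho>') n c v s" if "\<rho>' < \<rho>" for \<rho>'
    using revenue_mono_risk[OF that \<rho> assms(3,5,2)] .
  show "(SUP sc\<in>{(s', c'). 0 \<le> s' \<and> 0 < c' \<and> c' < v - s'}.
          seller_revenue (cara \<rho>) n (snd sc) v (fst sc)) = cara \<rho> v"
    using revenue_sup[OF \<rho> assms(1,2)] .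
qed

end
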